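(* Let $P$ be a disjunctive program and let $P_1,P_2,\dots$ be any module sequence for $P$ (induced by any enumeration of $GH$). Then: (1) $\bigcup_{i\ge 1}P_i=\mathsf{Ground}(P)$; (2) for each $i\ge 1$ and each $j\ge i$, $\mathit{atom}(P_i)$ is a splitting set of $P_j$ and $P_i=bot_{\mathit{atom}(P_i)}(P_j)$; (3) for each $i\ge 1$, $\mathit{atom}(P_i)$ is a splitting set of $P$ and $P_i=bot_{\mathit{atom}(P_i)}(P)$; (4) for each $i\ge 1$, $P_i$ is downward closed.
   Context: A disjunctive program is a set of rules $A_1\vee\dots\vee A_m\leftarrow L_1,\dots,L_n$ ($m>0$, $n\ge 0$) where the $A_j$ are atoms and each $L_i$ is an atom $A$ or a negated atom $\mathtt{not}\,A$, over a first-order language possibly containing function symbols. For a rule $r$, $head(r)=\{A_1,\dots,A_m\}$. $\mathsf{Ground}(P)$ is the set of ground instances of rules of $P$ over the Herbrand universe; for a set $X$ of ground rules, $\mathit{atom}(X)$ is the set of ground atoms occurring in $X$, and $\mathit{atom}(r)$ the set of atoms of a ground rule $r$. The dependency graph of $P$ has the ground atoms as vertices and an edge from $A$ to $B$ whenever, for some $r\in\mathsf{Ground}(P)$, $A\in head(r)$ and $B$ occurs in $r$ (positively or negatively in the body, or in the head). $A$ depends on $B$ if there is a directed path from $A$ to $B$ in this graph; every atom depends on itself. $GH=\{p\mid p\in head(r), r\in\mathsf{Ground}(P)\}$. Given an enumeration $p_1,p_2,\dots$ of $GH$, the induced module sequence is $P_1=\{r\in\mathsf{Ground}(P)\mid p_1\text{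 depends on some }A\in head(r)\}$ and $P_{i+1}=P_i\cup\{r\in\mathsf{Ground}(P)\mid p_{i+1}\text{ depends on some }A\in head(r)\}$. For a set $Q$ of ground rules (for a non-ground $P$, take $Q=\mathsf{Ground}(P)$), a splitting set of $Q$ is a set $U$ of ground atoms such that for every $r\in Q$, if $head(r)\cap U\ne\emptyset$ then $\mathit{atom}(r)\subseteq U$; then $bot_U(Q)=\{r\in Q\mid head(r)\cap U\neq\emptyset\}$. A subprogram $P'\subseteq\mathsf{Ground}(P)$ is downward closed if for each atom $A\in\mathit{atom}(P')$, $P'$ contains every $r\in\mathsf{Ground}(P)$ with $A\in head(r)$. *)

theory Defs
  imports Main
begin

datatype ('f, 'v) trm = Var 'v | Fn 'f "('f, 'v) trm list"

datatype ('p, 'f, 'v) atom = Atom 'p "('f, 'v) trm list"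

datatype ('p, 'f, 'v) literal = Pos "('p, 'f, 'v) atom" | Neg "('p, 'f, 'v) atom"

text \<open>A rule  A1 v ... v Am <- L1, ..., Ln.\<close>
datatype ('p, 'f, 'v) rule = Rule (heads: "('p, 'f, 'v) atom list") (body: "('p, 'f, 'v) literal list")

definition disj_program :: "('p, 'f, 'v) rule set \<Rightarrow> bool" where
  "disj_program P \<longleftrightarrow> (\<forall>r\<in>P. heads r \<noteq> [])"

fun lit_atom :: "('p, 'f, 'v) literal \<Rightarrow> ('p, 'f, 'v) atom" where
  "lit_atom (Pos a) = a"
| "lit_atom (Neg a) = a"

definition head :: "('p, 'f, 'v) rule \<Rightarrow> ('p, 'f, 'v) atom set" where
  "head r = set (heads r)"

definition atoms_rule :: "('p, 'f, 'v) rule \<Rightarrow> ('p, 'f, 'v) atom set" where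
  "atoms_rule r = set (heads r) \<union> lit_atom ` set (body r)"

definition atoms :: "('p, 'f, 'v) rule set \<Rightarrow> ('p, 'f, 'v) atom set" where
  "atoms X = (\<Union>r\<in>X. atoms_rule r)"

fun vars_trm :: "('f, 'v) trm \<Rightarrow> 'v set" where
  "vars_trm (Var x) = {x}"
| "vars_trm (Fn f ts) = (\<Union>t\<in>set ts. vars_trm t)"

fun subst_trm :: "('v \<Rightarrow> ('f, 'v) trm) \<Rightarrow> ('f, 'v) trm \<Rightarrow> ('f, 'v) trm" where
  "subst_trm \<sigma> (Var x) = \<sigma> x"
| "subst_trm \<sigma> (Fn f ts) = Fn f (map (subst_trm \<sigma>) ts)"

fun subst_atom :: "('v \<Rightarrow> ('f, 'v) trm) \<Rightarrow> ('p, 'f, 'v) atom \<Rightarrow> ('p, 'f, 'v) atom" where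
  "subst_atom \<sigma> (Atom q ts) = Atom q (map (subst_trm \<sigma>) ts)"

fun subst_lit :: "('v \<Rightarrow> ('f, 'v) trm) \<Rightarrow> ('p, 'f, 'v) literal \<Rightarrow> ('p, 'f, 'v) literal" where
  "subst_lit \<sigma> (Pos a) = Pos (subst_atom \<sigma> a)"
| "subst_lit \<sigma> (Neg a) = Neg (subst_atom \<sigma> a)"

fun subst_rule :: "('v \<Rightarrow> ('f, 'v) trm) \<Rightarrow> ('p, 'f, 'v) rule \<Rightarrow> ('p, 'f, 'v) rule" where
  "subst_rule \<sigma> (Rule hs bs) = Rule (map (subst_atom \<sigma>) hs) (map (subst_lit \<sigma>) bs)"

definition ground_subst :: "('v \<Rightarrow> ('f, 'v) trm) \<Rightarrow> bool" where
  "ground_subst \<sigma> \<longleftrightarrow> (\<forall>x. vars_trm (\<sigma> x) = {})"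

definition Ground :: "('p, 'f, 'v) rule set \<Rightarrow> ('p, 'f, 'v) rule set" where
  "Ground P = {subst_rule \<sigma> r | \<sigma> r. r \<in> P \<and> ground_subst \<sigma>}"

definition dep_edge :: "('p, 'f, 'v) rule set \<Rightarrow> ('p, 'f, 'v) atom \<Rightarrow> ('p, 'f, 'v) atom \<Rightarrow> bool" where
  "dep_edge P A B \<longleftrightarrow> (\<exists>r\<in>Ground P. A \<in> head r \<and> B \<in> atoms_rule r)"

definition depends :: "('p, 'f, 'v) rule set \<Rightarrow> ('p, 'f, 'v) atom \<Rightarrow> ('p, 'f, 'v) atom \<Rightarrow> bool" where
  "depends P A B \<longleftrightarrow> (dep_edge P)\<^sup>*\<^sup>* A B"

definition GH :: "('p, 'f, 'v) rule set \<Rightarrow> ('p, 'f, 'v) atom set" where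
  "GH P = {q. \<exists>r\<in>Ground P. q \<in> head r}"

text \<open>Module sequence induced by an enumeration p_1, p_2, ... (indices from 1; index 0 gives the empty set).\<close>
primrec module_seq :: "('p, 'f, 'v) rule set \<Rightarrow> (nat \<Rightarrow> ('p, 'f, 'v) atom) \<Rightarrow> nat \<Rightarrow> ('p, 'f, 'v) rule set" where
  "module_seq P p 0 = {}"
| "module_seq P p (Suc i) =
     module_seq P p i \<union> {r \<in> Ground P. \<exists>A\<in>head r. depends P (p (Suc i)) A}"

definition splitting_set :: "('p, 'f, 'v) atom set \<Rightarrow> ('p, 'f, 'v) rule set \<Rightarrow> bool" where
  "splitting_set U Q \<longleftrightarrow> (\<forall>r\<in>Q. head r \<inter> U \<noteq> {} \<longrightarrow> atoms_rule r \<subseteq> U)"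

definition bot :: "('p, 'f, 'v) atom set \<Rightarrow> ('p, 'f, 'v) rule set \<Rightarrow> ('p, 'f, 'v) rule set" where
  "bot U Q = {r \<in> Q. head r \<inter> U \<noteq> {}}"

definition downward_closed :: "('p, 'f, 'v) rule set \<Rightarrow> ('p, 'f, 'v) rule set \<Rightarrow> bool" where
  "downward_closed P P' \<longleftrightarrow>
     P' \<subseteq> Ground P \<and> (\<forall>A\<in>atoms P'. \<forall>r\<in>Ground P. A \<in> head r \<longrightarrow> r \<in> P')"

end

theory Submission
  imports Defs
begin

text \<open>The module \<open>P\<^sub>i\<close> consists of exactly the ground rules having a head atom on which one of
  \<open>p\<^sub>1, \<dots>, p\<^sub>i\<close> depends. This set of atoms is closed under dependency edges, so \<open>P\<^sub>i\<close> is
  downward closed; downward closed sets of rules with nonempty heads are bottoms with respect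
  to splitting sets, and bottoms restrict to every intermediate program. Covering of
  \<open>Ground(P)\<close> holds because each ground rule has a head atom, which is some \<open>p\<^sub>k\<close>.\<close>

lemma head_subset_atoms_rule: "head r \<subseteq> atoms_rule r"
  by (auto simp: head_def atoms_rule_def)

lemma head_Ground_nonempty:
  assumes "disj_program P" and "r \<in> Ground P"
  shows "head r \<noteq> {}"
proof -
  from assms(2) obtain \<sigma> r0 where "r = subst_rule \<sigma> r0" "r0 \<in> P"
    by (auto simp: Ground_def)
  with assms(1) show ?thesis
    by (cases r0) (auto simp: disj_program_def head_def)
qed

lemma splitting_set_subset:
  "splitting_set U Q \<Longrightarrow> Q' \<subseteq> Q \<Longrightarrow> splitting_set U Q'"
  by (auto simp: splitting_set_def)

lemma bot_subset:
  "bot U Q = X \<Longrightarrow> X \<subseteq> Q' \<Longrightarrow> Q' \<subseteq> Q \<Longrightarrow> bot U Q' = X"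
  by (auto simp: bot_def)

lemma splitting_set_if_downward_closed:
  assumes "downward_closed P P'"
  shows "splitting_set (atoms P') (Ground P)"
  using assms by (fastforce simp: downward_closed_def splitting_set_def atoms_def)

lemma bot_eq_if_downward_closed:
  assumes "downward_closed P P'" and "\<And>r. r \<in> P' \<Longrightarrow> head r \<noteq> {}"
  shows "bot (atoms P') (Ground P) = P'"
proof -
  have "head r \<inter> atoms P' \<noteq> {}" if "r \<in> P'" for r
    using that assms(2)[OF that] head_subset_atoms_rule[of r] by (auto simp: atoms_def)
  with assms(1) show ?thesis
    by (auto simp: bot_def downward_closed_def)
qed

definition reachable_atoms ::
    "('p, 'f, 'v) rule set \<Rightarrow> (nat \<Rightarrow> ('p, 'f, 'v) atom) \<Rightarrow> nat \<Rightarrow> ('p, 'f, 'v) atom set" where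
  "reachable_atoms P p i = {A. \<exists>k\<in>{1..i}. depends P (p k) A}"

lemma reachable_atoms_Suc:
  "reachable_atoms P p (Suc i) = reachable_atoms P p i \<union> {A. depends P (p (Suc i)) A}"
  unfolding reachable_atoms_def
  by (auto simp: le_Suc_eq) (metis atLeastAtMost_iff le_refl Suc_le_mono le0)

lemma reachable_atoms_dep_edge:
  "A \<in> reachable_atoms P p i \<Longrightarrow> dep_edge P A B \<Longrightarrow> B \<in> reachable_atoms P p i"
  by (auto simp: reachable_atoms_def depends_def intro: rtranclp.rtrancl_into_rtrancl)

lemma module_seq_eq:
  "module_seq P p i = {r \<in> Ground P. head r \<inter> reachable_atoms P p i \<noteq> {}}"
proof (induction i)
  case 0
  then show ?case by (simp add: reachable_atoms_def)
next
  case (Suc i)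
  show ?case
    unfolding module_seq.simps Suc reachable_atoms_Suc by blast
qed

lemma module_seq_mono: "i \<le> j \<Longrightarrow> module_seq P p i \<subseteq> module_seq P p j"
  by (induction j) (auto simp: le_Suc_eq)

lemma atoms_module_seq_subset: "atoms (module_seq P p i) \<subseteq> reachable_atoms P p i"
proof
  fix B assume "B \<in> atoms (module_seq P p i)"
  then obtain r A where "r \<in> Ground P" "A \<in> head r" "A \<in> reachable_atoms P p i"
      "B \<in> atoms_rule r"
    by (auto simp: atoms_def module_seq_eq)
  then show "B \<in> reachable_atoms P p i"
    by (meson dep_edge_def reachable_atoms_dep_edge)
qed

lemma downward_closed_module_seq: "downward_closed P (module_seq P p i)"
  using atoms_module_seq_subset[of P p i]
  by (auto simp: downward_closed_def module_seq_eq)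

lemma bot_module_seq: "bot (atoms (module_seq P p i)) (Ground P) = module_seq P p i"
  by (rule bot_eq_if_downward_closed[OF downward_closed_module_seq])
    (auto simp: module_seq_eq)

lemma UN_module_seq:
  assumes "disj_program P" and "p ` {1..} = GH P"
  shows "(\<Union>i\<in>{1..}. module_seq P p i) = Ground P"
proof
  show "(\<Union>i\<in>{1..}. module_seq P p i) \<subseteq> Ground P"
    by (auto simp: module_seq_eq)
  show "Ground P \<subseteq> (\<Union>i\<in>{1..}. module_seq P p i)"
  proof
    fix r assume r: "r \<in> Ground P"
    then obtain A where A: "A \<in> head r"
      using head_Ground_nonempty[OF assms(1)] by blast
    with r have "A \<in> GH P" by (auto simp: GH_def)
    with assms(2) obtain k where k: "k \<ge> 1" "p k = A" by (metis atLeast_iff imageE)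
    then have "A \<in> reachable_atoms P p k"
      by (auto simp: reachable_atoms_def depends_def)
    with r A k show "r \<in> (\<Union>i\<in>{1..}. module_seq P p i)"
      by (auto simp: module_seq_eq)
  qed
qed

theorem proposition3p2:
  fixes P :: "('p, 'f, 'v) rule set"
    and p :: "nat \<Rightarrow> ('p, 'f, 'v) atom"
  assumes prog: "disj_program P"
    and enum: "p ` {1..} = GH P"
  shows "((\<Union>i\<in>{1..}. module_seq P p i) = Ground P)
    \<and> (\<forall>i\<ge>1. \<forall>j\<ge>i. splitting_set (atoms (module_seq P p i)) (module_seq P p j)
                        \<and> module_seq P p i = bot (atoms (module_seq P p i)) (module_seq P p j))
    \<and> (\<forall>i\<ge>1. splitting_set (atoms (module_seq P p i)) (Ground P)
                \<and> module_seq P p i = bot (atoms (module_seq P p i)) (Ground P))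
    \<and> (\<forall>i\<ge>1. downward_closed P (module_seq P p i))"
proof (intro conjI allI impI)
  show "(\<Union>i\<in>{1..}. module_seq P p i) = Ground P"
    using prog enum by (rule UN_module_seq)
  fix i
  show split: "splitting_set (atoms (module_seq P p i)) (Ground P)"
    by (rule splitting_set_if_downward_closed[OF downward_closed_module_seq])
  show "module_seq P p i = bot (atoms (module_seq P p i)) (Ground P)"
    by (rule bot_module_seq[symmetric])
  show "downward_closed P (module_seq P p i)"
    by (rule downward_closed_module_seq)
  fix j assume "i \<le> j"
  moreover have sub: "module_seq P p j \<subseteq> Ground P"
    by (auto simp: module_seq_eq)
  ultimately show "splitting_set (atoms (module_seq P p i)) (module_seq P p j)"
    "module_seq P p i = bot (atoms (module_seq P p i)) (module_seq P p j)"
    using splitting_set_subset[OF split sub]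
      bot_subset[OF bot_module_seq module_seq_mono sub] by auto
qed

end
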